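(* Let $M,N,p,r\ge1$. If $i$ is constant, or if the multisets $\{(a_y,b_y)\}_{y=1}^p$ and $\{(a_y,b_{y+1})\}_{y=1}^p$ coincide, then $(E_x)$ holds for all $x$. The normalized number $\beta_p^r(M,N)$ of triples $(i,a,b)$ satisfying one of these two conditions (divided by $M^{p+r}N^p$) equals $$\beta_p^r(M,N)=\delta_p(M,N)+\frac{1}{M^{r-1}}\big(1-\delta_p(M,N)\big),$$ and $\beta_p^r(M,N)=d_p^r(M,N)$ whenever $M=1$, or $N=1$, or $r=1$, or $p\le3$.
   Context: For integers $M,N,p,r\ge1$, consider triples $(i,a,b)$ with $i\in\mathbb Z_M^r$, $a\in\mathbb Z_M^p$, $b\in\mathbb Z_N^p$, with cyclic conventions $i_{r+1}=i_1$, $b_{p+1}=b_1$. For $x\in\{1,\dots,r\}$, condition $(E_x)$ says that the multisets $\{(i_x+a_y,b_y),(i_{x+1}+a_y,b_{y+1}):y=1,\dots,p\}$ and $\{(i_x+a_y,b_{y+1}),(i_{x+1}+a_y,b_y):y=1,\dots,p\}$ of elements of $\mathbb Z_M\times\mathbb Z_N$ (counted with multiplicity) coincide. Define $d_p^r(M,N)=\frac{1}{M^{p+r}N^p}\#\{(i,a,b):(E_x)\text{ holds for all }x\}$ and $\delta_p(M,N)=\frac{1}{(MN)^p}\#\{(a,b)\in\mathbb Z_M^p\times\mathbb Z_N^p:\{(a_y,b_y)\}_{y=1}^p=\{(a_y,b_{y+1})\}_{y=1}^p\text{ as multisets}\}$. A tuple is constant if all its entries are equal. *)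

theory Defs
  imports Complex_Main "HOL-Library.Multiset"
begin

text \<open>Tuples in Z_m^k: functions nat => nat, entries indexed 0..k-1 with values in
  {0..<m} (representatives of Z_m), and 0 outside the index range (extensional).
  Cyclic index successor: y+1 mod k.\<close>

definition tuples :: "nat \<Rightarrow> nat \<Rightarrow> (nat \<Rightarrow> nat) set" where
  "tuples m k = {f. (\<forall>j<k. f j < m) \<and> (\<forall>j. k \<le> j \<longrightarrow> f j = 0)}"

text \<open>Condition (E_x), x in 0..r-1 (0-based), with arithmetic in Z_M x Z_N.\<close>
definition cond_E :: "nat \<Rightarrow> nat \<Rightarrow> nat \<Rightarrow> nat \<Rightarrow> (nat \<Rightarrow> nat) \<Rightarrow> (nat \<Rightarrow> nat) \<Rightarrow> (nat \<Rightarrow> nat) \<Rightarrow> nat \<Rightarrow> bool" where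
  "cond_E M N p r i a b x \<longleftrightarrow>
     image_mset (\<lambda>y. ((i x + a y) mod M, b y mod N)) (mset_set {..<p})
   + image_mset (\<lambda>y. ((i (Suc x mod r) + a y) mod M, b (Suc y mod p) mod N)) (mset_set {..<p})
   = image_mset (\<lambda>y. ((i x + a y) mod M, b (Suc y mod p) mod N)) (mset_set {..<p})
   + image_mset (\<lambda>y. ((i (Suc x mod r) + a y) mod M, b y mod N)) (mset_set {..<p})"

definition triples :: "nat \<Rightarrow> nat \<Rightarrow> nat \<Rightarrow> nat \<Rightarrow> ((nat \<Rightarrow> nat) \<times> (nat \<Rightarrow> nat) \<times> (nat \<Rightarrow> nat)) set" where
  "triples M N p r = tuples M r \<times> tuples M p \<times> tuples N p"

definition d_pr :: "nat \<Rightarrow> nat \<Rightarrow> nat \<Rightarrow> nat \<Rightarrow> real" where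
  "d_pr p r M N = real (card {(i, a, b) \<in> triples M N p r. \<forall>x<r. cond_E M N p r i a b x})
      / (real M ^ (p + r) * real N ^ p)"

definition mcond :: "nat \<Rightarrow> (nat \<Rightarrow> nat) \<Rightarrow> (nat \<Rightarrow> nat) \<Rightarrow> bool" where
  "mcond p a b \<longleftrightarrow>
     image_mset (\<lambda>y. (a y, b y)) (mset_set {..<p})
   = image_mset (\<lambda>y. (a y, b (Suc y mod p))) (mset_set {..<p})"

definition delta_p :: "nat \<Rightarrow> nat \<Rightarrow> nat \<Rightarrow> real" where
  "delta_p p M N = real (card {(a, b) \<in> tuples M p \<times> tuples N p. mcond p a b})
      / (real M * real N) ^ p"

definition const_tuple :: "nat \<Rightarrow> (nat \<Rightarrow> nat) \<Rightarrow> bool" where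
  "const_tuple r i \<longleftrightarrow> (\<forall>x<r. \<forall>x'<r. i x = i x')"

definition beta_pr :: "nat \<Rightarrow> nat \<Rightarrow> nat \<Rightarrow> nat \<Rightarrow> real" where
  "beta_pr p r M N = real (card {(i, a, b) \<in> triples M N p r. const_tuple r i \<or> mcond p a b})
      / (real M ^ (p + r) * real N ^ p)"

end

theory Submission
  imports Defs "HOL-Number_Theory.Cong"
begin

text \<open>If \<open>i\<close> is constant, the two sides of \<open>(E\<^sub>x)\<close> coincide term by term; if the
  multiset condition holds, they are the images of equal multisets under the translations by
  \<open>i\<^sub>x\<close> and \<open>i\<^sub>x\<^sub>+\<^sub>1\<close>. The triples satisfying one of the two conditions therefore form
  \<open>C \<times> (\<int>\<^sub>M\<^sup>p \<times> \<int>\<^sub>N\<^sup>p) \<union> \<int>\<^sub>M\<^sup>r \<times> D\<close>, with \<open>C\<close> the \<open>M\<close> constant tuples and \<open>D\<close> the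
  pairs satisfying the multiset condition, and inclusion-exclusion gives \<open>\<beta>\<close>.

  For the converse with \<open>p \<le> 3\<close>, pick \<open>x\<close> with \<open>c = i\<^sub>x \<noteq> i\<^sub>x\<^sub>+\<^sub>1 = d\<close>. The translates
  \<open>c + a\<^sub>y\<close> and \<open>d + a\<^sub>y\<close> are then distinct, and \<open>c + a\<^sub>y = c + a\<^sub>y\<^sub>'\<close> forces
  \<open>a\<^sub>y = a\<^sub>y\<^sub>'\<close>. Comparing, for each value of the second coordinate, the first coordinates of
  the points on both sides of \<open>(E\<^sub>x)\<close> gives \<open>c + a\<^sub>y = c + a\<^sub>y\<^sub>'\<close> for enough pairs with
  \<open>b\<^sub>y \<noteq> b\<^sub>y\<^sub>'\<close> to yield the multiset condition. The cases \<open>M = 1\<close>, \<open>r = 1\<close> (\<open>i\<close> constant)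
  and \<open>N = 1\<close> (\<open>b\<close> constant) are trivial.\<close>

lemma bij_betw_lists_tuples:
  "bij_betw (\<lambda>xs j. if j < k then xs ! j else 0)
     {xs. set xs \<subseteq> {..<m} \<and> length xs = k} (tuples m k)"
proof (rule bij_betw_byWitness[where f' = "\<lambda>f. map f [0..<k]"])
  show "\<forall>xs\<in>{xs. set xs \<subseteq> {..<m} \<and> length xs = k}.
          map (\<lambda>j. if j < k then xs ! j else 0) [0..<k] = xs"
    by (auto intro: nth_equalityI)
  show "\<forall>f\<in>tuples m k. (\<lambda>j. if j < k then map f [0..<k] ! j else 0) = f"
    by (auto simp: tuples_def fun_eq_iff)
qed (auto simp: tuples_def dest!: nth_mem)

lemma finite_tuples: "finite (tuples m k)"
  using bij_betw_finite[OF bij_betw_lists_tuples] finite_lists_length_eq[of "{..<m}" k] by simp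

lemma card_tuples: "card (tuples m k) = m ^ k"
  using bij_betw_same_card[OF bij_betw_lists_tuples] by (simp add: card_lists_length_eq)

lemma card_Times_Un_Times:
  assumes "finite A'" "finite B" "A \<subseteq> A'" "B' \<subseteq> B"
  shows "card (A \<times> B \<union> A' \<times> B') + card A * card B' = card A * card B + card A' * card B'"
proof -
  have "A \<times> B \<inter> A' \<times> B' = A \<times> B'"
    using assms(3,4) by auto
  moreover have "finite A" "finite B'"
    using assms finite_subset by auto
  ultimately show ?thesis
    using card_Un_Int[of "A \<times> B" "A' \<times> B'"] assms by (simp add: card_cartesian_product)
qed

lemma const_tuples_eq_image:
  assumes "r \<ge> 1"
  shows "{i \<in> tuples M r. const_tuple r i} = (\<lambda>c j. if j < r then c else 0) ` {..<M}"
proof (intro equalityI subsetI)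
  fix i assume i: "i \<in> {i \<in> tuples M r. const_tuple r i}"
  then have const: "\<forall>x<r. \<forall>x'<r. i x = i x'" and zero: "\<forall>j\<ge>r. i j = 0"
    and "\<forall>j<r. i j < M"
    unfolding tuples_def const_tuple_def by blast+
  have "i = (\<lambda>j. if j < r then i 0 else 0)"
  proof
    fix j
    show "i j = (if j < r then i 0 else 0)"
      using const zero assms by (metis less_le_trans not_le zero_less_one)
  qed
  moreover have "i 0 < M"
    using \<open>\<forall>j<r. i j < M\<close> assms by simp
  ultimately show "i \<in> (\<lambda>c j. if j < r then c else 0) ` {..<M}"
    by blast
qed (auto simp: tuples_def const_tuple_def)

lemma card_const_tuples:
  assumes "r \<ge> 1"
  shows "card {i \<in> tuples M r. const_tuple r i} = M"
proof -
  have "inj_on (\<lambda>c j. if j < r then c else 0) {..<M}"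
  proof (rule inj_onI)
    fix c c' assume "(\<lambda>j. if j < r then c else 0) = (\<lambda>j. if j < r then c' else (0::nat))"
    from fun_cong[OF this, of 0] show "c = c'"
      using assms by simp
  qed
  then show ?thesis
    by (simp add: const_tuples_eq_image[OF assms] card_image)
qed

lemma const_tuple_if_cyclic_steps:
  assumes "\<forall>x<r. i x = i (Suc x mod r)"
  shows "const_tuple r i"
proof -
  have "i x = i 0" if "x < r" for x
    using that
  proof (induction x)
    case (Suc x)
    then show ?case
      using assms by (metis Suc_lessD mod_less)
  qed simp
  then show ?thesis
    unfolding const_tuple_def by metis
qed

lemma cond_E_if_const_tuple:
  assumes "const_tuple r i" "x < r"
  shows "cond_E M N p r i a b x"
proof -
  have "Suc x mod r < r"
    using assms(2) by simp
  then have "i (Suc x mod r) = i x"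
    using assms unfolding const_tuple_def by blast
  then show ?thesis
    unfolding cond_E_def by (simp add: add.commute)
qed

lemma cond_E_if_mcond:
  assumes "mcond p a b"
  shows "cond_E M N p r i a b x"
proof -
  have "image_mset (\<lambda>y. ((c + a y) mod M, b y mod N)) (mset_set {..<p})
      = image_mset (\<lambda>y. ((c + a y) mod M, b (Suc y mod p) mod N)) (mset_set {..<p})" for c
    using arg_cong[OF assms[unfolded mcond_def],
        of "image_mset (\<lambda>(\<alpha>, \<beta>). ((c + \<alpha>) mod M, \<beta> mod N))"]
    by (simp add: multiset.map_comp o_def)
  then show ?thesis
    unfolding cond_E_def by simp
qed

text \<open>In the next two lemmas \<open>u\<^sub>y\<close> and \<open>v\<^sub>y\<close> stand for the translates of \<open>a\<^sub>y\<close> by \<open>i\<^sub>x\<close>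
  and by \<open>i\<^sub>x\<^sub>+\<^sub>1\<close>, respectively.\<close>

lemma swap_pairs_of_translates:
  assumes E: "{#(u0,b0),(u1,b1),(v0,b1),(v1,b0)#} = {#(u0,b1),(u1,b0),(v0,b0),(v1,b1)#}"
    and "u0 \<noteq> v0" "u0 = u1 \<Longrightarrow> a0 = a1"
  shows "{#(a0,b0),(a1,b1)#} = {#(a0,b1),(a1,b0)#}"
proof (cases "b0 = b1")
  case False
  from arg_cong[OF E, of "\<lambda>X. image_mset fst (filter_mset (\<lambda>z. snd z = b0) X)"]
  have "{#u0, v1#} = {#u1, v0#}"
    using False by (simp add: add_mset_commute)
  then have "u0 = u1"
    using assms(2) by (auto simp: add_eq_conv_ex)
  then show ?thesis
    using assms by (simp add: add_mset_commute)
qed simp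

lemma cycle_pairs_of_translates:
  assumes E: "{#(u0,b0),(u1,b1),(u2,b2),(v0,b1),(v1,b2),(v2,b0)#}
            = {#(u0,b1),(u1,b2),(u2,b0),(v0,b0),(v1,b1),(v2,b2)#}"
    and uv: "u0 \<noteq> v0" "u1 \<noteq> v1" "u2 \<noteq> v2"
    and ua: "u0 = u1 \<Longrightarrow> a0 = a1" "u0 = u2 \<Longrightarrow> a0 = a2" "u1 = u2 \<Longrightarrow> a1 = a2"
  shows "{#(a0,b0),(a1,b1),(a2,b2)#} = {#(a0,b1),(a1,b2),(a2,b0)#}"
proof -
  have fiber: "image_mset fst (filter_mset (\<lambda>z. snd z = \<beta>)
                 {#(u0,b0),(u1,b1),(u2,b2),(v0,b1),(v1,b2),(v2,b0)#})
             = image_mset fst (filter_mset (\<lambda>z. snd z = \<beta>)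
                 {#(u0,b1),(u1,b2),(u2,b0),(v0,b0),(v1,b1),(v2,b2)#})" for \<beta>
    using E by simp
  have u01: "u0 = u1" if "b0 \<noteq> b1" "b1 \<noteq> b2"
  proof -
    from fiber[of b1] that have "{#u1, v0#} = {#u0, v1#}"
      by (auto simp: add_mset_commute)
    then show ?thesis
      using uv by (auto simp: add_eq_conv_ex)
  qed
  have u02: "u0 = u2" if "b0 \<noteq> b2" "b0 \<noteq> b1"
  proof -
    from fiber[of b0] that have "{#u0, v2#} = {#u2, v0#}"
      by (auto simp: add_mset_commute)
    then show ?thesis
      using uv by (auto simp: add_eq_conv_ex)
  qed
  have u12: "u1 = u2" if "b2 \<noteq> b0" "b1 \<noteq> b2"
  proof -
    from fiber[of b2] that have "{#u2, v1#} = {#u1, v2#}"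
      by (auto simp: add_mset_commute)
    then show ?thesis
      using uv by (auto simp: add_eq_conv_ex)
  qed
  consider "b0 = b1" "b1 = b2" | "b0 = b1" "b1 \<noteq> b2" | "b1 = b2" "b0 \<noteq> b1"
    | "b0 = b2" "b0 \<noteq> b1" | "b0 \<noteq> b1" "b1 \<noteq> b2" "b0 \<noteq> b2"
    by blast
  then show ?thesis
  proof cases
    case 1
    then show ?thesis
      by simp
  next
    case 2
    then have "a1 = a2"
      using u12 ua(3) by simp
    with 2 show ?thesis
      by (simp add: add_mset_commute)
  next
    case 3
    then have "a0 = a2"
      using u02 ua(2) by simp
    with 3 show ?thesis
      by (simp add: add_mset_commute)
  next
    case 4
    then have "a0 = a1"
      using u01 ua(1) by simp
    with 4 show ?thesis
      by (simp add: add_mset_commute)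
  next
    case 5
    then have "a0 = a1" "a0 = a2"
      using u01 u02 ua(1,2) by simp_all
    then show ?thesis
      by (simp add: add_mset_commute)
  qed
qed

lemma mcond_if_cond_E_at_nonconstant_step:
  assumes E: "cond_E M N p r i a b x"
    and step: "i x \<noteq> i (Suc x mod r)" "i x < M" "i (Suc x mod r) < M"
    and ab: "\<forall>y<p. a y < M" "\<forall>y<p. b y < N"
    and "p \<le> 3"
  shows "mcond p a b"
proof -
  define c d where "c = i x" and "d = i (Suc x mod r)"
  have E: "image_mset (\<lambda>y. ((c + a y) mod M, b y mod N)) (mset_set {..<p})
      + image_mset (\<lambda>y. ((d + a y) mod M, b (Suc y mod p) mod N)) (mset_set {..<p})
    = image_mset (\<lambda>y. ((c + a y) mod M, b (Suc y mod p) mod N)) (mset_set {..<p})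
      + image_mset (\<lambda>y. ((d + a y) mod M, b y mod N)) (mset_set {..<p})"
    using E unfolding cond_E_def c_def d_def .
  have translate_cancel: "(e + s) mod M = (e + t) mod M \<longleftrightarrow> s mod M = t mod M" for e s t :: nat
    using cong_add_lcancel_nat by (simp add: cong_def)
  have translates_differ: "(c + a y) mod M \<noteq> (d + a y) mod M" for y
    using translate_cancel[of _ c d] step by (simp add: c_def d_def add.commute)
  have translate_inj: "a y = a y'" if "(c + a y) mod M = (c + a y') mod M" "y < p" "y' < p" for y y'
    using that ab translate_cancel by simp
  have b_mod: "b y mod N = b y" if "y < p" for y
    using ab that by simp
  consider "p \<le> 1" | "p = 2" | "p = 3"
    using \<open>p \<le> 3\<close> by linarith
  then show ?thesis
  proof cases
    case 1
    then have "Suc y mod p = y" if "y < p" for y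
      using that by (cases p) auto
    then show ?thesis
      unfolding mcond_def by (intro image_mset_cong) simp
  next
    case 2
    have S: "{..<2::nat} = {0, 1}"
      by auto
    have "{#((c + a 0) mod M, b 0), ((c + a 1) mod M, b 1),
            ((d + a 0) mod M, b 1), ((d + a 1) mod M, b 0)#}
        = {#((c + a 0) mod M, b 1), ((c + a 1) mod M, b 0),
            ((d + a 0) mod M, b 0), ((d + a 1) mod M, b 1)#}"
      using E[unfolded 2 S] 2 b_mod[of 0] b_mod[of 1]
      by (simp add: add_mset_commute)
    then have "{#(a 0, b 0), (a 1, b 1)#} = {#(a 0, b 1), (a 1, b 0)#}"
      by (rule swap_pairs_of_translates) (use translates_differ translate_inj 2 in auto)
    then show ?thesis
      unfolding 2 by (simp add: mcond_def S add_mset_commute)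
  next
    case 3
    have S: "{..<3::nat} = {0, 1, 2}"
      by auto
    have "{#((c + a 0) mod M, b 0), ((c + a 1) mod M, b 1), ((c + a 2) mod M, b 2),
            ((d + a 0) mod M, b 1), ((d + a 1) mod M, b 2), ((d + a 2) mod M, b 0)#}
        = {#((c + a 0) mod M, b 1), ((c + a 1) mod M, b 2), ((c + a 2) mod M, b 0),
            ((d + a 0) mod M, b 0), ((d + a 1) mod M, b 1), ((d + a 2) mod M, b 2)#}"
      using E[unfolded 3 S] 3 b_mod[of 0] b_mod[of 1] b_mod[of 2]
      by (simp add: add_mset_commute numeral_2_eq_2)
    then have "{#(a 0, b 0), (a 1, b 1), (a 2, b 2)#} = {#(a 0, b 1), (a 1, b 2), (a 2, b 0)#}"
      by (rule cycle_pairs_of_translates) (use translates_differ translate_inj 3 in auto)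
    then show ?thesis
      unfolding 3 by (simp add: mcond_def S add_mset_commute numeral_2_eq_2)
  qed
qed

lemma const_or_mcond_if_cond_E:
  assumes "(i, a, b) \<in> triples M N p r" "\<forall>x<r. cond_E M N p r i a b x"
    and "M = 1 \<or> N = 1 \<or> r = 1 \<or> p \<le> 3"
  shows "const_tuple r i \<or> mcond p a b"
proof -
  have i: "\<forall>j<r. i j < M" and ab: "\<forall>y<p. a y < M" "\<forall>y<p. b y < N"
    and b0: "\<forall>j\<ge>p. b j = 0"
    using assms(1) by (auto simp: triples_def tuples_def)
  consider "M = 1" | "N = 1" | "r = 1" | "p \<le> 3"
    using assms(3) by blast
  then show ?thesis
  proof cases
    case 2
    then have "b = (\<lambda>_. 0)"
      using ab(2) b0 by (metis less_one not_le)
    then show ?thesis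
      by (simp add: mcond_def)
  next
    case 4
    show ?thesis
    proof (cases "const_tuple r i")
      case False
      then obtain x where x: "x < r" "i x \<noteq> i (Suc x mod r)"
        using const_tuple_if_cyclic_steps by blast
      then have "i x < M" "i (Suc x mod r) < M"
        using i by auto
      with x ab 4 assms(2) show ?thesis
        using mcond_if_cond_E_at_nonconstant_step by blast
    qed simp
  qed (use i in \<open>auto simp: const_tuple_def\<close>)
qed

lemma beta_pr_eq:
  assumes "M \<ge> 1" "N \<ge> 1" "r \<ge> 1"
  shows "beta_pr p r M N = delta_p p M N + (1 - delta_p p M N) / real M ^ (r - 1)"
proof -
  define C where "C = {i \<in> tuples M r. const_tuple r i}"
  define T where "T = tuples M p \<times> tuples N p"
  define D where "D = {(a, b) \<in> tuples M p \<times> tuples N p. mcond p a b}"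
  have split: "{(i, a, b) \<in> triples M N p r. const_tuple r i \<or> mcond p a b}
      = C \<times> T \<union> tuples M r \<times> D"
    by (auto simp: triples_def C_def D_def T_def)
  have "C \<subseteq> tuples M r" "D \<subseteq> T"
    by (auto simp: C_def D_def T_def)
  then have "card (C \<times> T \<union> tuples M r \<times> D) + M * card D = M * (M ^ p * N ^ p) + M ^ r * card D"
    using card_Times_Un_Times[of "tuples M r" T C D] card_const_tuples[OF assms(3), of M]
    by (simp add: C_def [symmetric] T_def finite_tuples card_tuples card_cartesian_product)
  then have "real (card {(i, a, b) \<in> triples M N p r. const_tuple r i \<or> mcond p a b})
      = real M * (real M ^ p * real N ^ p) + real M ^ r * card D - real M * card D"
    unfolding split by (metis (mono_tags) add_diff_cancel_right' of_nat_add of_nat_mult of_nat_power)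
  moreover obtain r' where "r = Suc r'"
    using assms(3) by (cases r) auto
  ultimately show ?thesis
    using assms(1,2) unfolding beta_pr_def delta_p_def D_def
    by (simp add: field_simps power_add power_mult_distrib)
qed

theorem theorem3p5:
  fixes M N p r :: nat
  assumes "M \<ge> 1" "N \<ge> 1" "p \<ge> 1" "r \<ge> 1"
  shows "(\<forall>(i, a, b) \<in> triples M N p r. (const_tuple r i \<or> mcond p a b)
             \<longrightarrow> (\<forall>x<r. cond_E M N p r i a b x))
       \<and> beta_pr p r M N = delta_p p M N + (1 - delta_p p M N) / real M ^ (r - 1)
       \<and> ((M = 1 \<or> N = 1 \<or> r = 1 \<or> p \<le> 3) \<longrightarrow> beta_pr p r M N = d_pr p r M N)"
proof (intro conjI impI)
  show "\<forall>(i, a, b) \<in> triples M N p r. (const_tuple r i \<or> mcond p a b)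
          \<longrightarrow> (\<forall>x<r. cond_E M N p r i a b x)"
    using cond_E_if_const_tuple cond_E_if_mcond by blast
  show "beta_pr p r M N = delta_p p M N + (1 - delta_p p M N) / real M ^ (r - 1)"
    using beta_pr_eq assms by blast
  assume "M = 1 \<or> N = 1 \<or> r = 1 \<or> p \<le> 3"
  then have "(\<forall>x<r. cond_E M N p r i a b x) \<longleftrightarrow> const_tuple r i \<or> mcond p a b"
    if "(i, a, b) \<in> triples M N p r" for i a b
    using that by (meson const_or_mcond_if_cond_E cond_E_if_const_tuple cond_E_if_mcond)
  then have "{(i, a, b) \<in> triples M N p r. \<forall>x<r. cond_E M N p r i a b x}
           = {(i, a, b) \<in> triples M N p r. const_tuple r i \<or> mcond p a b}"
    by auto
  then show "beta_pr p r M N = d_pr p r M N"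
    unfolding beta_pr_def d_pr_def by simp
qed

end
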